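(* Let $\Bbbk$ be a field and $q\in\Bbbk$ with $[m]_q:=1+q+\cdots+q^{m-1}\ne0$ for all $m\ge1$, and $[m]_q!=[1]_q\cdots[m]_q$. Then for all $k\ge1$, $$\det \begin{pmatrix} 1&\frac{t}{[1]_q!}&\frac{t^2}{[2]_q!}&\ldots &\frac{t^k}{[k]_q!}\\ 1&\frac{1}{[1]_q!}&\frac{1}{[2]_q!}&\ldots &\frac{1}{[k]_q!}\\ 0&1&\frac{1}{[1]_q!}&\ldots &\frac{1}{[k-1]_q!}\\ \vdots&\vdots&\ddots&\ddots&\vdots \\ 0&0&\ldots &1&\frac{1}{[1]_q!} \end{pmatrix} =\frac{(1-t)(q-t)\cdots (q^{k-1}-t)}{[k]_q!}.$$
   Context: The matrix is $(k+1)\times(k+1)$; row $r\ge3$ has zeros in its first $r-2$ entries, $1$ in entry $r-1$, followed by $1/[1]_q!,1/[2]_q!,\dots$. *)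

theory Defs
  imports Main "Jordan_Normal_Form.Determinant"
begin

definition qint :: "'a::field \<Rightarrow> nat \<Rightarrow> 'a" where
  "qint q m = (\<Sum>i<m. q ^ i)"

definition qfact :: "'a::field \<Rightarrow> nat \<Rightarrow> 'a" where
  "qfact q m = (\<Prod>i\<in>{1..m}. qint q i)"

definition cor_mat :: "'a::field \<Rightarrow> 'a \<Rightarrow> nat \<Rightarrow> 'a mat" where
  "cor_mat q t k = mat (k+1) (k+1) (\<lambda>(i,j).
     if i = 0 then t ^ j / qfact q j
     else if i - 1 \<le> j then 1 / qfact q (j + 1 - i) else 0)"

end

theory Submission
  imports Defs
begin

text \<open>
  Apart from its first row \<open>a\<close>, the matrix is a lower Hessenberg Toeplitz band with entries
  \<open>e n = 1/[n]!\<close>. Expanding along the first column gives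
  \<open>det = \<Sum>j. (-e 0)^j * a j * h (k - j)\<close>, where \<open>h n\<close> is the determinant of the pure
  \<open>n \<times> n\<close> Toeplitz Hessenberg matrix of the band. For this band \<open>h n = q^(n choose 2) / [n]!\<close>,
  so the determinant is \<open>\<Sum>j. (-t)^j q^(k-j choose 2) / ([j]! [k-j]!)\<close>, which the q-binomial
  theorem turns into \<open>(1 - t)(q - t)\<cdots>(q^(k-1) - t) / [k]!\<close>. The formula for \<open>h n\<close> is the
  q-binomial theorem again: at \<open>t = 1\<close> the product vanishes, and the vanishing sum is exactly
  the recursion satisfied by \<open>h\<close>.
\<close>

definition hessenberg_mat :: "(nat \<Rightarrow> 'a::field) \<Rightarrow> (nat \<Rightarrow> 'a) \<Rightarrow> nat \<Rightarrow> 'a mat" where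
  "hessenberg_mat a e k = mat (k+1) (k+1) (\<lambda>(i,j).
     if i = 0 then a j else if i - 1 \<le> j then e (j + 1 - i) else 0)"

lemma mat_delete_hessenberg_mat_0_0:
  "mat_delete (hessenberg_mat a e (Suc k)) 0 0 = hessenberg_mat (\<lambda>j. e (Suc j)) e k"
  unfolding hessenberg_mat_def mat_delete_def
  by (rule eq_matI) (auto simp: Suc_diff_le)

lemma mat_delete_hessenberg_mat_1_0:
  "mat_delete (hessenberg_mat a e (Suc k)) (Suc 0) 0 = hessenberg_mat (\<lambda>j. a (Suc j)) e k"
  unfolding hessenberg_mat_def mat_delete_def
  by (rule eq_matI) (auto simp: Suc_diff_le)

lemma det_hessenberg_mat_0: "det (hessenberg_mat a e 0) = a 0"
proof -
  have "det (hessenberg_mat a e 0) =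
      (\<Sum>i<1. hessenberg_mat a e 0 $$ (i,0) * cofactor (hessenberg_mat a e 0) i 0)"
    by (rule laplace_expansion_column) (auto simp: hessenberg_mat_def)
  also have "\<dots> = a 0"
    by (simp add: cofactor_def hessenberg_mat_def mat_delete_def)
  finally show ?thesis .
qed

lemma det_hessenberg_mat_Suc:
  "det (hessenberg_mat a e (Suc k)) =
     a 0 * det (hessenberg_mat (\<lambda>j. e (Suc j)) e k) - e 0 * det (hessenberg_mat (\<lambda>j. a (Suc j)) e k)"
proof -
  let ?A = "hessenberg_mat a e (Suc k)"
  have "det ?A = (\<Sum>i<Suc (Suc k). ?A $$ (i,0) * cofactor ?A i 0)"
    by (rule laplace_expansion_column) (auto simp: hessenberg_mat_def)
  also have "\<dots> = (\<Sum>i<2. ?A $$ (i,0) * cofactor ?A i 0)"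
    by (rule sum.mono_neutral_right) (auto simp: hessenberg_mat_def)
  also have "\<dots> = ?A $$ (0,0) * det (mat_delete ?A 0 0) - ?A $$ (1,0) * det (mat_delete ?A 1 0)"
    by (simp add: numeral_2_eq_2 cofactor_def)
  moreover have "?A $$ (0,0) = a 0" "?A $$ (1,0) = e 0"
    by (auto simp: hessenberg_mat_def)
  ultimately show ?thesis
    by (simp add: mat_delete_hessenberg_mat_0_0 mat_delete_hessenberg_mat_1_0)
qed

definition toeplitz_hessenberg_det :: "(nat \<Rightarrow> 'a::field) \<Rightarrow> nat \<Rightarrow> 'a" where
  "toeplitz_hessenberg_det e n =
     (if n = 0 then 1 else det (hessenberg_mat (\<lambda>j. e (Suc j)) e (n - 1)))"

lemma det_hessenberg_mat_expansion:
  "det (hessenberg_mat a e k) = (\<Sum>j\<le>k. (- e 0)^j * a j * toeplitz_hessenberg_det e (k - j))"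
proof (induction k arbitrary: a)
  case 0
  then show ?case by (simp add: det_hessenberg_mat_0 toeplitz_hessenberg_det_def)
next
  case (Suc k)
  have "det (hessenberg_mat a e (Suc k)) = a 0 * toeplitz_hessenberg_det e (Suc k)
          + (\<Sum>j\<le>k. (- e 0)^Suc j * a (Suc j) * toeplitz_hessenberg_det e (k - j))"
    unfolding det_hessenberg_mat_Suc Suc[of "\<lambda>j. a (Suc j)"]
    by (simp add: toeplitz_hessenberg_det_def sum_distrib_left sum_negf algebra_simps)
  then show ?case
    unfolding sum.atMost_Suc_shift by simp
qed

lemma toeplitz_hessenberg_det_Suc:
  "toeplitz_hessenberg_det e (Suc n) =
     (\<Sum>j\<le>n. (- e 0)^j * e (Suc j) * toeplitz_hessenberg_det e (n - j))"
  using det_hessenberg_mat_expansion[of "\<lambda>j. e (Suc j)" e n]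
  by (simp add: toeplitz_hessenberg_det_def)

lemma qfact_0 [simp]: "qfact q 0 = 1"
  by (simp add: qfact_def)

lemma qfact_Suc: "qfact q (Suc n) = qfact q n * qint q (Suc n)"
  by (simp add: qfact_def prod.nat_ivl_Suc')

lemma qint_0 [simp]: "qint q 0 = 0"
  by (simp add: qint_def)

lemma qint_add: "qint q (j + m) = qint q j + q ^ j * qint q m"
  by (induction m) (auto simp: qint_def algebra_simps power_add)

lemma qfact_nonzero:
  assumes "\<And>m. m \<ge> 1 \<Longrightarrow> qint q m \<noteq> 0"
  shows "qfact q n \<noteq> 0"
  using assms by (induction n) (auto simp: qfact_Suc)

definition qbinomial_term :: "'a::field \<Rightarrow> 'a \<Rightarrow> nat \<Rightarrow> nat \<Rightarrow> 'a" where
  "qbinomial_term q t k j = (- t) ^ j * q ^ (k - j choose 2) / (qfact q j * qfact q (k - j))"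

definition qbinomial_sum :: "'a::field \<Rightarrow> 'a \<Rightarrow> nat \<Rightarrow> 'a" where
  "qbinomial_sum q t k = (\<Sum>j\<le>k. qbinomial_term q t k j)"

context
  fixes q :: "'a::field"
  assumes qint_nonzero: "\<And>m. m \<ge> 1 \<Longrightarrow> qint q m \<noteq> 0"
begin

lemma qbinomial_term_Suc_left:
  assumes "j \<le> k"
  shows "q ^ j * qint q (Suc k - j) * qbinomial_term q t (Suc k) j = q ^ k * qbinomial_term q t k j"
proof -
  obtain m where k: "k = j + m" using assms le_Suc_ex by blast
  have "Suc k - j = Suc m" "k - j = m" "Suc m choose 2 = (m choose 2) + m"
    using k by (auto simp: numeral_2_eq_2)
  moreover have "qfact q j \<noteq> 0" "qfact q m \<noteq> 0" "qint q (Suc m) \<noteq> 0"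
    using qint_nonzero qfact_nonzero by auto
  ultimately show ?thesis
    by (simp add: qbinomial_term_def qfact_Suc k power_add field_simps)
qed

lemma qbinomial_term_Suc_right:
  "qint q (Suc j) * qbinomial_term q t (Suc k) (Suc j) = - t * qbinomial_term q t k j"
proof -
  have "qfact q j \<noteq> 0" "qfact q (k - j) \<noteq> 0" "qint q (Suc j) \<noteq> 0"
    using qint_nonzero qfact_nonzero by auto
  then show ?thesis
    by (simp add: qbinomial_term_def qfact_Suc field_simps)
qed

text \<open>The q-analogue of Pascal's rule: split \<open>[k+1] = q^j [k+1-j] + [j]\<close> termwise.\<close>

lemma qbinomial_sum_Suc: "qint q (Suc k) * qbinomial_sum q t (Suc k) = (q ^ k - t) * qbinomial_sum q t k"
proof -
  let ?b = "qbinomial_term q t (Suc k)"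
  have "qint q (Suc k) * qbinomial_sum q t (Suc k) =
      (\<Sum>j\<le>Suc k. q ^ j * qint q (Suc k - j) * ?b j) + (\<Sum>j\<le>Suc k. qint q j * ?b j)"
    unfolding qbinomial_sum_def sum_distrib_left sum.distrib[symmetric]
  proof (rule sum.cong)
    fix j assume "j \<in> {..Suc k}"
    then have "qint q (Suc k) = qint q j + q ^ j * qint q (Suc k - j)"
      using qint_add[of q j "Suc k - j"] by simp
    then show "qint q (Suc k) * ?b j = q ^ j * qint q (Suc k - j) * ?b j + qint q j * ?b j"
      by (simp add: algebra_simps)
  qed simp
  also have "(\<Sum>j\<le>Suc k. q ^ j * qint q (Suc k - j) * ?b j) = q ^ k * qbinomial_sum q t k"
    unfolding qbinomial_sum_def sum_distrib_left by (simp add: qbinomial_term_Suc_left)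
  also have "(\<Sum>j\<le>Suc k. qint q j * ?b j) = - t * qbinomial_sum q t k"
    unfolding qbinomial_sum_def sum_distrib_left sum.atMost_Suc_shift
    by (simp add: qbinomial_term_Suc_right)
  finally show ?thesis by (simp add: algebra_simps)
qed

theorem qbinomial_theorem: "qfact q k * qbinomial_sum q t k = (\<Prod>i<k. q ^ i - t)"
proof (induction k)
  case 0
  then show ?case by (simp add: qbinomial_sum_def qbinomial_term_def numeral_2_eq_2)
next
  case (Suc k)
  have "qfact q (Suc k) * qbinomial_sum q t (Suc k) = qfact q k * (qint q (Suc k) * qbinomial_sum q t (Suc k))"
    by (simp add: qfact_Suc)
  also have "\<dots> = (q ^ k - t) * (qfact q k * qbinomial_sum q t k)"
    by (simp add: qbinomial_sum_Suc)
  finally show ?case using Suc by simp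
qed

lemma qbinomial_sum_one_Suc: "qbinomial_sum q 1 (Suc n) = 0"
proof -
  have "qfact q (Suc n) * qbinomial_sum q 1 (Suc n) = 0"
    unfolding qbinomial_theorem by (rule prod_zero) (auto intro!: bexI[of _ 0])
  then show ?thesis
    using qfact_nonzero[OF qint_nonzero] by simp
qed

lemma toeplitz_hessenberg_det_inverse_qfact:
  "toeplitz_hessenberg_det (\<lambda>n. 1 / qfact q n) n = q ^ (n choose 2) / qfact q n"
proof (induction n rule: less_induct)
  case (less n)
  show ?case
  proof (cases n)
    case 0
    then show ?thesis by (simp add: toeplitz_hessenberg_det_def numeral_2_eq_2)
  next
    case (Suc m)
    have "toeplitz_hessenberg_det (\<lambda>n. 1 / qfact q n) n =
        (\<Sum>j\<le>m. (-1) ^ j * (1 / qfact q (Suc j)) * (q ^ (m - j choose 2) / qfact q (m - j)))"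
      unfolding Suc toeplitz_hessenberg_det_Suc by (rule sum.cong) (auto simp: less Suc)
    also have "\<dots> = q ^ (n choose 2) / qfact q n"
      using qbinomial_sum_one_Suc[of m]
      unfolding Suc qbinomial_sum_def sum.atMost_Suc_shift
      by (simp add: qbinomial_term_def sum_negf)
    finally show ?thesis .
  qed
qed

end

theorem corollary2p5:
  fixes q t :: "'a::field" and k :: nat
  assumes "\<And>m. m \<ge> 1 \<Longrightarrow> qint q m \<noteq> 0"
    and "k \<ge> 1"
  shows "det (cor_mat q t k) = (\<Prod>i<k. q ^ i - t) / qfact q k"
proof -
  have "cor_mat q t k = hessenberg_mat (\<lambda>j. t ^ j / qfact q j) (\<lambda>n. 1 / qfact q n) k"
    unfolding cor_mat_def hessenberg_mat_def by simp
  then have "det (cor_mat q t k) =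
      (\<Sum>j\<le>k. (-1) ^ j * (t ^ j / qfact q j) * toeplitz_hessenberg_det (\<lambda>n. 1 / qfact q n) (k - j))"
    by (simp add: det_hessenberg_mat_expansion)
  also have "\<dots> = qbinomial_sum q t k"
    unfolding qbinomial_sum_def qbinomial_term_def
    by (rule sum.cong) (auto simp: toeplitz_hessenberg_det_inverse_qfact[OF assms(1)] power_minus')
  also have "\<dots> = (\<Prod>i<k. q ^ i - t) / qfact q k"
    using qbinomial_theorem[OF assms(1), of k t] qfact_nonzero[OF assms(1), of k]
    by (simp add: field_simps)
  finally show ?thesis .
qed

end
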